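(* Let $\overline{F}$ be a finite set, let $r=(r(i,j):i,j\in\overline{F})$ be an irreducible stochastic matrix (transition matrix of a homogeneous Markov chain $X$ on $\overline{F}$), and let $\boldsymbol{\alpha}=(\alpha_j:j\in\overline{F})\in[0,1]^{\overline{F}}$ be a non-zero vector of acceptance probabilities. Let $X^{(\boldsymbol{\alpha})}$ be the Markov chain obtained from $X$ by randomized skipping with acceptance probabilities $\boldsymbol{\alpha}$, with transition matrix $r^{(\boldsymbol{\alpha})}$, and let $B(\boldsymbol{\alpha})=\{j\in\overline{F}:\alpha_j=0\}$ (so $B(\boldsymbol{\alpha})\subsetneq\overline{F}$). Then \[ r^{(\boldsymbol{\alpha})}(i,j)=P\big(X^{(A)}(\tau^{(A)})=j\,\big|\,(X^{(A)}_0,Y^{(A)}_0)=(i,0)\big),\qquad i,j\in\overline{F}, \] the chain $X^{(\boldsymbol{\alpha})}$ is irreducible on $\overline{F}\setminus B(\boldsymbol{\alpha})$, and \[ r^{(\boldsymbol{\alpha})}=\sum_{k=0}^{\infty}\big(r I_{(1-\boldsymbol{\alpha})}\big)^{k} r I_{\boldsymbol{\alpha}}=\big(I-rI_{(1-\boldsymbol{\alpha})}\big)^{-1} r I_{\boldsymbol{\alpha}} . \]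
   Context: $I_{\boldsymbol{\alpha}}$ denotes the diagonal matrix indexed by $\overline{F}$ with diagonal entries $\alpha_j$, and $I_{(1-\boldsymbol{\alpha})}$ the diagonal matrix with diagonal entries $1-\alpha_j$; $I$ is the identity matrix. Randomized skipping: a random walker at state $i$ proposes a destination $j$ with probability $r(i,j)$; independently of the past given $j$, a Bernoulli experiment with success probability $\alpha_j$ is performed. On success the jump to $j$ is performed and the walker stays at $j$ for (at least) one time step. On failure the walker performs only an imaginary jump to $j$, spending no time there, and immediately proposes a new destination $l$ with probability $r(j,l)$, which is again accepted with probability $\alpha_l$, and so on, until some proposal is accepted; the accepted state is the next state of $X^{(\boldsymbol{\alpha})}$. The auxiliary chain $(X^{(A)},Y^{(A)})$ is the Markov chain on $\overline{F}\times\{0,1\}$ with transition probabilities $P(X^{(A)}_{n+1}=j,Y^{(A)}_{n+1}=1\mid X^{(A)}_n=i,Y^{(A)}_n=0)=r(i,j)\alpha_j$, $P(X^{(A)}_{n+1}=j,Y^{(A)}_{n+1}=0\mid X^{(A)}_n=i,Y^{(A)}_n=0)=r(i,j)(1-\alpha_j)$, and with all states in $\overline{F}\times\{1\}$ absorbing (transition probability $\delta_{ij}$ from $(i,1)$ to $(j,1)$, and $0$ to $(j,0)$); it is started in $\overline{F}\times\{0\}$. $\tau^{(A)}=\inf\{n\ge 1: Y^{(A)}_n=1\}$ is its absorption time. *)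

theory Defs
  imports Complex_Main
begin

text \<open>Matrices indexed by a finite type 'n (the state space F-bar = UNIV) are
  represented as functions 'n => 'n => real.\<close>

definition mmult :: "('a::finite \<Rightarrow> 'a \<Rightarrow> real) \<Rightarrow> ('a \<Rightarrow> 'a \<Rightarrow> real) \<Rightarrow> 'a \<Rightarrow> 'a \<Rightarrow> real" where
  "mmult A B i j = (\<Sum>l\<in>UNIV. A i l * B l j)"

definition mid :: "'a \<Rightarrow> 'a \<Rightarrow> real" where
  "mid i j = (if i = j then 1 else 0)"

fun mpow :: "('a::finite \<Rightarrow> 'a \<Rightarrow> real) \<Rightarrow> nat \<Rightarrow> 'a \<Rightarrow> 'a \<Rightarrow> real" where
  "mpow A 0 = mid"
| "mpow A (Suc n) = mmult (mpow A n) A"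

definition diagm :: "('a \<Rightarrow> real) \<Rightarrow> 'a \<Rightarrow> 'a \<Rightarrow> real" where
  "diagm d i j = (if i = j then d i else 0)"

definition stochastic :: "('a::finite \<Rightarrow> 'a \<Rightarrow> real) \<Rightarrow> bool" where
  "stochastic P \<longleftrightarrow> (\<forall>i j. 0 \<le> P i j) \<and> (\<forall>i. (\<Sum>j\<in>UNIV. P i j) = 1)"

fun mpow_on :: "'a set \<Rightarrow> ('a \<Rightarrow> 'a \<Rightarrow> real) \<Rightarrow> nat \<Rightarrow> 'a \<Rightarrow> 'a \<Rightarrow> real" where
  "mpow_on S A 0 i j = (if i = j then 1 else 0)"
| "mpow_on S A (Suc n) i j = (\<Sum>l\<in>S. mpow_on S A n i l * A l j)"

definition irreducible_on :: "'a set \<Rightarrow> ('a \<Rightarrow> 'a \<Rightarrow> real) \<Rightarrow> bool" where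
  "irreducible_on S P \<longleftrightarrow> (\<forall>i\<in>S. \<forall>j\<in>S. \<exists>n. mpow_on S P n i j > 0)"

definition irreducible :: "('a::finite \<Rightarrow> 'a \<Rightarrow> real) \<Rightarrow> bool" where
  "irreducible P \<longleftrightarrow> irreducible_on UNIV P"

text \<open>Randomized skipping: skip_within r a n i j is the probability that, starting
  at i, one of the first n proposals is accepted and the accepted state is j.
  First proposal l (prob. r i l): accepted with prob. a l (then result l),
  otherwise an imaginary jump to l and the procedure restarts from l.\<close>
fun skip_within :: "('a::finite \<Rightarrow> 'a \<Rightarrow> real) \<Rightarrow> ('a \<Rightarrow> real) \<Rightarrow> nat \<Rightarrow> 'a \<Rightarrow> 'a \<Rightarrow> real" where
  "skip_within r a 0 i j = 0"
| "skip_within r a (Suc n) i j =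
     r i j * a j + (\<Sum>l\<in>UNIV. r i l * (1 - a l) * skip_within r a n l j)"

definition skip_matrix :: "('a::finite \<Rightarrow> 'a \<Rightarrow> real) \<Rightarrow> ('a \<Rightarrow> real) \<Rightarrow> 'a \<Rightarrow> 'a \<Rightarrow> real" where
  "skip_matrix r a i j = lim (\<lambda>n. skip_within r a n i j)"

text \<open>Auxiliary chain (X^(A),Y^(A)) on F x {0,1}; False encodes 0, True encodes 1.\<close>
definition aux_P :: "('a::finite \<Rightarrow> 'a \<Rightarrow> real) \<Rightarrow> ('a \<Rightarrow> real) \<Rightarrow> ('a \<times> bool) \<Rightarrow> ('a \<times> bool) \<Rightarrow> real" where
  "aux_P r a s t =
     (case (s, t) of
        ((i, False), (j, True)) \<Rightarrow> r i j * a j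
      | ((i, False), (j, False)) \<Rightarrow> r i j * (1 - a j)
      | ((i, True), (j, True)) \<Rightarrow> (if i = j then 1 else 0)
      | ((i, True), (j, False)) \<Rightarrow> 0)"

text \<open>P(X^(A)(tau^(A)) = j | start (i,0)): since F x {1} is absorbing,
  P(tau <= n, X^(A)(tau) = j) is the n-step probability from (i,0) to (j,1);
  the absorption probability is its limit as n tends to infinity.\<close>
definition absorb_prob :: "('a::finite \<Rightarrow> 'a \<Rightarrow> real) \<Rightarrow> ('a \<Rightarrow> real) \<Rightarrow> 'a \<Rightarrow> 'a \<Rightarrow> real" where
  "absorb_prob r a i j = lim (\<lambda>n. mpow (aux_P r a) n (i, False) (j, True))"

end

theory Submission imports Defs begin

text \<open>Write Q = r I_(1-\<alpha>) and R = r I_\<alpha>. Splitting the skipping procedure according to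
  the number k of rejected proposals before the first acceptance gives r^(\<alpha>) = \<Sum>_k Q^k R,
  and the same recursion describes the n-step probabilities of the auxiliary chain from
  F \<times> {0} into the absorbing layer F \<times> {1}. The partial sums have row sums at most 1
  because r is stochastic. Since \<alpha> \<noteq> 0 and r is irreducible, from every state some
  proposal is eventually accepted with positive probability; comparing Q^k with the
  convergent series \<Sum>_k Q^k R makes the powers of Q summable, so the Neumann series
  \<Sum>_k Q^k inverts I - Q. Irreducibility of the skipped chain on the accepting states
  comes from cutting an r-path between accepting states at its accepting intermediate
  states.\<close>

lemma mmult_assoc: "mmult (mmult A B) C = mmult A (mmult B C)"
proof (intro ext)
  fix i j
  have "mmult (mmult A B) C i j = (\<Sum>k\<in>UNIV. \<Sum>l\<in>UNIV. A i l * B l k * C k j)"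
    unfolding mmult_def by (simp add: sum_distrib_right)
  also have "\<dots> = (\<Sum>l\<in>UNIV. \<Sum>k\<in>UNIV. A i l * B l k * C k j)" by (rule sum.swap)
  also have "\<dots> = mmult A (mmult B C) i j"
    unfolding mmult_def by (simp add: sum_distrib_left mult.assoc)
  finally show "mmult (mmult A B) C i j = mmult A (mmult B C) i j" .
qed

lemma mmult_mid_left [simp]: "mmult mid A = A"
  unfolding mmult_def mid_def by (simp add: if_distrib[of "\<lambda>x. x * _"] cong: if_cong)

lemma mmult_mid_right [simp]: "mmult A mid = A"
  unfolding mmult_def mid_def by (simp add: if_distrib cong: if_cong)

lemma mmult_diff_right: "mmult A (\<lambda>i j. B i j - C i j) i j = mmult A B i j - mmult A C i j"
  unfolding mmult_def by (simp add: right_diff_distrib sum_subtractf)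

lemma mmult_diff_left: "mmult (\<lambda>i j. B i j - C i j) A i j = mmult B A i j - mmult C A i j"
  unfolding mmult_def by (simp add: left_diff_distrib sum_subtractf)

lemma mmult_diagm: "mmult A (diagm d) i j = A i j * d j"
  unfolding mmult_def diagm_def by (simp add: if_distrib cong: if_cong)

lemma mpow_add: "mpow A (m + n) = mmult (mpow A m) (mpow A n)"
  by (induction n) (auto simp: mmult_assoc)

lemma mpow_Suc_left: "mpow A (Suc n) = mmult A (mpow A n)"
  using mpow_add[of A 1 n] by simp

lemma mpow_on_UNIV: "mpow_on UNIV A n i j = mpow A n i j"
  by (induction n arbitrary: j) (simp_all add: mid_def mmult_def)

lemma mmult_nonneg: "(\<And>i j. 0 \<le> A i j) \<Longrightarrow> (\<And>i j. 0 \<le> B i j) \<Longrightarrow> 0 \<le> mmult A B i j"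
  unfolding mmult_def by (simp add: sum_nonneg)

lemma mpow_nonneg: "(\<And>i j. 0 \<le> A i j) \<Longrightarrow> 0 \<le> mpow A n i j"
  by (induction n arbitrary: i j) (auto simp: mid_def intro!: mmult_nonneg)

lemma mpow_on_nonneg: "(\<And>i j. 0 \<le> A i j) \<Longrightarrow> 0 \<le> mpow_on S A n i j"
  by (induction n arbitrary: i j) (auto intro!: sum_nonneg)

lemma mult_le_mmult:
  "(\<And>i j. 0 \<le> A i j) \<Longrightarrow> (\<And>i j. 0 \<le> B i j) \<Longrightarrow> A i l * B l j \<le> mmult A B i j"
  unfolding mmult_def by (rule member_le_sum) auto

lemma mpow_on_Suc_ge:
  "(\<And>i j. 0 \<le> A i j) \<Longrightarrow> z \<in> S \<Longrightarrow> mpow_on S A n x z * A z y \<le> mpow_on S A (Suc n) x y"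
  for A :: "'a::finite \<Rightarrow> 'a \<Rightarrow> real"
  by simp (rule member_le_sum; auto intro: mult_nonneg_nonneg mpow_on_nonneg)

lemma sum_pos_imp_ex_pos: "0 < sum (f :: _ \<Rightarrow> real) A \<Longrightarrow> \<exists>a\<in>A. 0 < f a"
  by (meson not_less sum_nonpos)

lemma mpow_Suc_posE:
  assumes "\<And>i j. 0 \<le> A i j" and "0 < mpow A (Suc n) x y"
  obtains w where "0 < mpow A n x w" and "0 < A w y"
proof -
  from assms(2) obtain w where "0 < mpow A n x w * A w y"
    unfolding mpow.simps mmult_def by (auto dest: sum_pos_imp_ex_pos)
  moreover have "0 \<le> mpow A n x w" by (rule mpow_nonneg) (fact assms(1))
  ultimately show thesis
    using that assms(1)[of w y] by (auto simp: zero_less_mult_iff)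
qed

lemma sum_UNIV_prod_bool: "(\<Sum>s\<in>UNIV. f s) = (\<Sum>l\<in>UNIV. f (l, False) + f (l, True))"
  for f :: "'a::finite \<times> bool \<Rightarrow> real"
proof -
  have "(\<Sum>s\<in>UNIV. f s) = (\<Sum>l\<in>UNIV. \<Sum>b\<in>UNIV. f (l, b))"
    by (simp add: sum.cartesian_product flip: UNIV_Times_UNIV)
  then show ?thesis by (simp add: UNIV_bool add.commute)
qed

lemma sums_mmult_left:
  "(\<And>i l. (\<lambda>k. F k i l) sums G i l) \<Longrightarrow> (\<lambda>k. mmult (F k) B i j) sums mmult G B i j"
  unfolding mmult_def by (intro sums_sum sums_mult2)

lemma sums_mmult_right:
  "(\<And>l j. (\<lambda>k. F k l j) sums G l j) \<Longrightarrow> (\<lambda>k. mmult B (F k) i j) sums mmult B G i j"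
  unfolding mmult_def by (intro sums_sum sums_mult)

lemma neumann_series_inverse:
  fixes A :: "'a::finite \<Rightarrow> 'a \<Rightarrow> real"
  assumes summable: "\<And>i j. summable (\<lambda>k. mpow A k i j)"
  defines "N \<equiv> \<lambda>i j. \<Sum>k. mpow A k i j"
  shows "mmult N (\<lambda>i j. mid i j - A i j) = mid" and "mmult (\<lambda>i j. mid i j - A i j) N = mid"
proof -
  have N_sums: "(\<lambda>k. mpow A k i j) sums N i j" for i j
    unfolding N_def using summable by (rule summable_sums)
  have telescope: "(\<lambda>k. mpow A k i j - mpow A (Suc k) i j) sums mid i j" for i j
    using telescope_sums'[OF summable_LIMSEQ_zero[OF summable]] by simp
  show "mmult N (\<lambda>i j. mid i j - A i j) = mid"
  proof (intro ext)
    fix i j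
    have "(\<lambda>k. mmult (mpow A k) (\<lambda>i j. mid i j - A i j) i j) sums mmult N (\<lambda>i j. mid i j - A i j) i j"
      by (intro sums_mmult_left N_sums)
    then have "(\<lambda>k. mpow A k i j - mpow A (Suc k) i j) sums mmult N (\<lambda>i j. mid i j - A i j) i j"
      by (simp add: mmult_diff_right)
    with telescope show "mmult N (\<lambda>i j. mid i j - A i j) i j = mid i j"
      by (rule sums_unique2[symmetric])
  qed
  show "mmult (\<lambda>i j. mid i j - A i j) N = mid"
  proof (intro ext)
    fix i j
    have "(\<lambda>k. mmult (\<lambda>i j. mid i j - A i j) (mpow A k) i j) sums mmult (\<lambda>i j. mid i j - A i j) N i j"
      by (intro sums_mmult_right N_sums)
    then have "(\<lambda>k. mpow A k i j - mpow A (Suc k) i j) sums mmult (\<lambda>i j. mid i j - A i j) N i j"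
      by (simp only: mmult_diff_left mmult_mid_left mpow_Suc_left)
    with telescope show "mmult (\<lambda>i j. mid i j - A i j) N i j = mid i j"
      by (rule sums_unique2[symmetric])
  qed
qed

lemma left_inverse_eq_right_inverse:
  assumes "mmult N M = mid" and "mmult M N' = mid"
  shows "N = N'"
proof -
  have "N = mmult (mmult N M) N'" by (simp add: mmult_assoc assms(2))
  then show ?thesis by (simp add: assms(1))
qed

locale skipping =
  fixes r :: "'n::finite \<Rightarrow> 'n \<Rightarrow> real" and \<alpha> :: "'n \<Rightarrow> real"
begin

abbreviation Q :: "'n \<Rightarrow> 'n \<Rightarrow> real" where "Q \<equiv> mmult r (diagm (\<lambda>l. 1 - \<alpha> l))"
abbreviation R :: "'n \<Rightarrow> 'n \<Rightarrow> real" where "R \<equiv> mmult r (diagm \<alpha>)"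

lemma Q_eq: "Q i j = r i j * (1 - \<alpha> j)"
  by (rule mmult_diagm)

lemma R_eq: "R i j = r i j * \<alpha> j"
  by (rule mmult_diagm)

lemma skip_within_eq_sum: "skip_within r \<alpha> n i j = (\<Sum>k<n. mmult (mpow Q k) R i j)"
proof (induction n arbitrary: i)
  case 0
  then show ?case by simp
next
  case (Suc n)
  have "skip_within r \<alpha> (Suc n) i j
      = R i j + (\<Sum>l\<in>UNIV. Q i l * (\<Sum>k<n. mmult (mpow Q k) R l j))"
    by (simp add: Suc Q_eq[of i] R_eq[of i j])
  also have "(\<Sum>l\<in>UNIV. Q i l * (\<Sum>k<n. mmult (mpow Q k) R l j))
      = (\<Sum>k<n. mmult Q (mmult (mpow Q k) R) i j)"
    unfolding mmult_def[of Q] sum_distrib_left by (rule sum.swap)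
  also have "\<dots> = (\<Sum>k<n. mmult (mpow Q (Suc k)) R i j)"
    by (simp only: mpow_Suc_left mmult_assoc)
  finally show ?case
    by (simp only: sum.lessThan_Suc_shift mpow.simps(1) mmult_mid_left)
qed

lemma mpow_aux_P_absorbed: "mpow (aux_P r \<alpha>) n (l, True) t = (if t = (l, True) then 1 else 0)"
proof (induction n arbitrary: t)
  case 0
  then show ?case by (auto simp: mid_def)
next
  case (Suc n)
  have "mpow (aux_P r \<alpha>) (Suc n) (l, True) t
      = (\<Sum>s\<in>UNIV. if s = (l, True) then aux_P r \<alpha> s t else 0)"
    unfolding mpow.simps mmult_def Suc.IH by (intro sum.cong) auto
  also have "\<dots> = aux_P r \<alpha> (l, True) t"
    by simp
  also have "\<dots> = (if t = (l, True) then 1 else 0)"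
    by (cases t) (auto simp: aux_P_def split: bool.splits)
  finally show ?case .
qed

lemma mpow_aux_P_eq_skip_within:
  "mpow (aux_P r \<alpha>) n (i, False) (j, True) = skip_within r \<alpha> n i j"
proof (induction n arbitrary: i)
  case 0
  then show ?case by (simp add: mid_def)
next
  case (Suc n)
  have "mpow (aux_P r \<alpha>) (Suc n) (i, False) (j, True)
      = (\<Sum>l\<in>UNIV. r i l * (1 - \<alpha> l) * skip_within r \<alpha> n l j + (if l = j then r i j * \<alpha> j else 0))"
    unfolding mpow_Suc_left mmult_def sum_UNIV_prod_bool
    by (auto simp: aux_P_def Suc mpow_aux_P_absorbed intro!: sum.cong)
  then show ?case by (simp add: sum.distrib)
qed

lemma absorb_prob_eq_skip_matrix: "absorb_prob r \<alpha> i j = skip_matrix r \<alpha> i j"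
  unfolding absorb_prob_def skip_matrix_def mpow_aux_P_eq_skip_within ..

end

locale stochastic_skipping = skipping +
  assumes stochastic: "stochastic r"
    and alpha_range: "\<forall>j. 0 \<le> \<alpha> j \<and> \<alpha> j \<le> 1"
begin

lemma r_nonneg: "0 \<le> r i j"
  using stochastic unfolding stochastic_def by blast

lemma r_row_sum: "(\<Sum>j\<in>UNIV. r i j) = 1"
  using stochastic unfolding stochastic_def by blast

lemma Q_nonneg: "0 \<le> Q i j"
  unfolding Q_eq using r_nonneg alpha_range by simp

lemma R_nonneg: "0 \<le> R i j"
  unfolding R_eq using r_nonneg alpha_range by simp

lemma mpow_Q_nonneg: "0 \<le> mpow Q k i j"
  by (rule mpow_nonneg) (rule Q_nonneg)

lemma mpow_Q_R_nonneg: "0 \<le> mmult (mpow Q k) R i j"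
  by (intro mmult_nonneg mpow_Q_nonneg R_nonneg)

lemma skip_within_nonneg: "0 \<le> skip_within r \<alpha> n i j"
  unfolding skip_within_eq_sum by (intro sum_nonneg mpow_Q_R_nonneg)

lemma skip_within_row_sum_le_1: "(\<Sum>j\<in>UNIV. skip_within r \<alpha> n i j) \<le> 1"
proof (induction n arbitrary: i)
  case 0
  then show ?case by simp
next
  case (Suc n)
  have "(\<Sum>j\<in>UNIV. skip_within r \<alpha> (Suc n) i j)
     = (\<Sum>j\<in>UNIV. r i j * \<alpha> j) + (\<Sum>j\<in>UNIV. \<Sum>l\<in>UNIV. r i l * (1 - \<alpha> l) * skip_within r \<alpha> n l j)"
    by (simp add: sum.distrib)
  also have "(\<Sum>j\<in>UNIV. \<Sum>l\<in>UNIV. r i l * (1 - \<alpha> l) * skip_within r \<alpha> n l j)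
     = (\<Sum>l\<in>UNIV. r i l * (1 - \<alpha> l) * (\<Sum>j\<in>UNIV. skip_within r \<alpha> n l j))"
    by (subst sum.swap) (simp add: sum_distrib_left)
  also have "\<dots> \<le> (\<Sum>l\<in>UNIV. r i l * (1 - \<alpha> l))"
    using Suc.IH Q_nonneg[unfolded Q_eq] by (intro sum_mono mult_left_le)
  also have "(\<Sum>j\<in>UNIV. r i j * \<alpha> j) + (\<Sum>l\<in>UNIV. r i l * (1 - \<alpha> l)) = 1"
    by (simp add: algebra_simps sum.distrib[symmetric] r_row_sum)
  finally show ?case by simp
qed

lemma summable_mpow_Q_R: "summable (\<lambda>k. mmult (mpow Q k) R i j)"
proof (rule summableI_nonneg_bounded)
  fix n
  have "skip_within r \<alpha> n i j \<le> (\<Sum>j\<in>UNIV. skip_within r \<alpha> n i j)"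
    by (rule member_le_sum) (auto intro: skip_within_nonneg)
  then show "(\<Sum>k<n. mmult (mpow Q k) R i j) \<le> 1"
    using skip_within_row_sum_le_1[of n i] by (simp add: skip_within_eq_sum)
qed (rule mpow_Q_R_nonneg)

lemma skip_matrix_sums: "(\<lambda>k. mmult (mpow Q k) R i j) sums skip_matrix r \<alpha> i j"
proof -
  have "(\<lambda>n. skip_within r \<alpha> n i j) \<longlonglongrightarrow> (\<Sum>k. mmult (mpow Q k) R i j)"
    unfolding skip_within_eq_sum by (rule summable_LIMSEQ[OF summable_mpow_Q_R])
  from limI[OF this] show ?thesis
    unfolding skip_matrix_def by (simp add: summable_sums[OF summable_mpow_Q_R])
qed

lemma skip_matrix_nonneg: "0 \<le> skip_matrix r \<alpha> i j"
  unfolding sums_unique[OF skip_matrix_sums] by (intro suminf_nonneg summable_mpow_Q_R mpow_Q_R_nonneg)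

lemma mpow_Q_R_le_skip_matrix: "mmult (mpow Q k) R i j \<le> skip_matrix r \<alpha> i j"
  using sum_le_suminf[OF summable_mpow_Q_R, of "{k}" i j] mpow_Q_R_nonneg
    sums_unique[OF skip_matrix_sums] by simp

lemma mpow_Q_Suc_pos:
  assumes "0 < mpow Q k x w" and "0 < r w y" and "\<alpha> y = 0"
  shows "0 < mpow Q (Suc k) x y"
proof -
  have "0 < mpow Q k x w * Q w y" using assms by (simp add: Q_eq)
  also have "\<dots> \<le> mpow Q (Suc k) x y"
    unfolding mpow.simps by (intro mult_le_mmult mpow_Q_nonneg Q_nonneg)
  finally show ?thesis .
qed

lemma mpow_Q_R_pos:
  assumes "0 < mpow Q k x w" and "0 < r w y" and "0 < \<alpha> y"
  shows "0 < mmult (mpow Q k) R x y"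
proof -
  have "0 < mpow Q k x w * R w y" using assms by (simp add: R_eq)
  also have "\<dots> \<le> mmult (mpow Q k) R x y"
    by (intro mult_le_mmult mpow_Q_nonneg R_nonneg)
  finally show ?thesis .
qed

lemma path_rejected_or_accepted:
  assumes "0 < mpow r n x y"
  shows "(\<exists>k. 0 < mpow Q k x y) \<or> (\<exists>k z. 0 < mmult (mpow Q k) R x z)"
  using assms
proof (induction n arbitrary: y)
  case 0
  then show ?case by (auto simp: mid_def intro!: exI[of _ 0] split: if_splits)
next
  case (Suc n)
  obtain w where "0 < mpow r n x w" and r_wy: "0 < r w y"
    using mpow_Suc_posE[OF r_nonneg Suc.prems] .
  with Suc.IH consider k where "0 < mpow Q k x w" | "\<exists>k z. 0 < mmult (mpow Q k) R x z"
    by blast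
  then show ?case
  proof cases
    case (1 k)
    show ?thesis
    proof (cases "\<alpha> y = 0")
      case True
      then show ?thesis using mpow_Q_Suc_pos[OF 1 r_wy] by blast
    next
      case False
      then have "0 < \<alpha> y" using alpha_range by (auto simp: order_le_less)
      then show ?thesis using mpow_Q_R_pos[OF 1 r_wy] by blast
    qed
  qed blast
qed

abbreviation accepting where "accepting \<equiv> UNIV - {j. \<alpha> j = 0}"

text \<open>Cut a positive r-path from the accepting state x at its last accepting
  state z: x reaches z in the skipped chain, and z reaches y by rejections only.\<close>
lemma path_through_last_acceptance:
  assumes x: "x \<in> accepting" and path: "0 < mpow r n x y"
  shows "\<exists>z\<in>accepting. (\<exists>m. 0 < mpow_on accepting (skip_matrix r \<alpha>) m x z)
    \<and> (\<exists>k. 0 < mpow Q k z y) \<and> (y \<in> accepting \<longrightarrow> z = y)"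
  using path
proof (induction n arbitrary: y)
  case 0
  then show ?case using x by (auto simp: mid_def intro!: exI[of _ 0] split: if_splits)
next
  case (Suc n)
  obtain w where "0 < mpow r n x w" and r_wy: "0 < r w y"
    using mpow_Suc_posE[OF r_nonneg Suc.prems] .
  with Suc.IH obtain z m k where z: "z \<in> accepting"
    and m: "0 < mpow_on accepting (skip_matrix r \<alpha>) m x z" and k: "0 < mpow Q k z w"
    by blast
  show ?case
  proof (cases "y \<in> accepting")
    case True
    then have "0 < \<alpha> y" using alpha_range by (auto simp: order_le_less)
    with k r_wy have "0 < skip_matrix r \<alpha> z y"
      using mpow_Q_R_pos mpow_Q_R_le_skip_matrix order_less_le_trans by blast
    with m have "0 < mpow_on accepting (skip_matrix r \<alpha>) m x z * skip_matrix r \<alpha> z y"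
      by simp
    also have "\<dots> \<le> mpow_on accepting (skip_matrix r \<alpha>) (Suc m) x y"
      using z by (intro mpow_on_Suc_ge skip_matrix_nonneg)
    finally have "0 < mpow_on accepting (skip_matrix r \<alpha>) (Suc m) x y" .
    moreover have "0 < mpow Q 0 y y" by (simp add: mid_def)
    ultimately show ?thesis using True by blast
  next
    case False
    with mpow_Q_Suc_pos[OF k r_wy] have "0 < mpow Q (Suc k) z y" by simp
    with False z m show ?thesis by blast
  qed
qed

end

locale irreducible_skipping = stochastic_skipping +
  assumes irreducible: "irreducible r"
    and alpha_nonzero: "\<exists>j. \<alpha> j \<noteq> 0"
begin

lemma irreducible_mpow_pos: "\<exists>n. 0 < mpow r n i j"
  using irreducible unfolding irreducible_def irreducible_on_def mpow_on_UNIV by blast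

lemma irreducible_mpow_Suc_pos: "\<exists>n. 0 < mpow r (Suc n) i j"
proof -
  obtain l where r_il: "0 < r i l"
    using sum_pos_imp_ex_pos[of "r i" UNIV] r_row_sum by auto
  obtain n where "0 < mpow r n l j" using irreducible_mpow_pos by blast
  with r_il have "0 < r i l * mpow r n l j" by simp
  also have "\<dots> \<le> mpow r (Suc n) i j"
    unfolding mpow_Suc_left by (intro mult_le_mmult r_nonneg mpow_nonneg)
  finally show ?thesis ..
qed

lemma eventually_accepted: "\<exists>k j. 0 < mmult (mpow Q k) R l j"
proof -
  obtain j where "\<alpha> j \<noteq> 0" using alpha_nonzero by blast
  then have \<alpha>_j: "0 < \<alpha> j" using alpha_range by (auto simp: order_le_less)
  obtain n where "0 < mpow r (Suc n) l j" using irreducible_mpow_Suc_pos by blast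
  then obtain w where "0 < mpow r n l w" and "0 < r w j"
    by (rule mpow_Suc_posE[OF r_nonneg])
  then show ?thesis
    using path_rejected_or_accepted mpow_Q_R_pos[OF _ _ \<alpha>_j] by blast
qed

text \<open>Since Q^k(i,l) (Q^m R)(l,j) \<le> (Q^(k+m) R)(i,j), a positive entry of Q^m R in row l
  dominates column l of the powers of Q by the convergent series \<Sum>_k Q^k R.\<close>
lemma summable_mpow_Q: "summable (\<lambda>k. mpow Q k i l)"
proof -
  obtain m j where pos: "0 < mmult (mpow Q m) R l j" using eventually_accepted by blast
  have "summable (\<lambda>k. mmult (mpow Q (k + m)) R i j / mmult (mpow Q m) R l j)"
    using summable_ignore_initial_segment[OF summable_mpow_Q_R, of m] by (intro summable_divide) simp
  then show ?thesis
  proof (rule summable_comparison_test')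
    fix k
    have "mpow Q k i l * mmult (mpow Q m) R l j \<le> mmult (mpow Q k) (mmult (mpow Q m) R) i j"
      by (intro mult_le_mmult mpow_Q_nonneg mpow_Q_R_nonneg)
    also have "\<dots> = mmult (mpow Q (k + m)) R i j"
      by (simp only: mpow_add mmult_assoc)
    finally show "norm (mpow Q k i l) \<le> mmult (mpow Q (k + m)) R i j / mmult (mpow Q m) R l j"
      using pos mpow_Q_nonneg[of k i l] by (simp add: pos_le_divide_eq)
  qed
qed

lemma skip_matrix_eq_fundamental: "skip_matrix r \<alpha> = mmult (\<lambda>i j. \<Sum>k. mpow Q k i j) R"
proof (intro ext)
  fix i j
  have "(\<lambda>k. mmult (mpow Q k) R i j) sums mmult (\<lambda>i j. \<Sum>k. mpow Q k i j) R i j"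
    by (intro sums_mmult_left summable_sums summable_mpow_Q)
  with skip_matrix_sums show "skip_matrix r \<alpha> i j = mmult (\<lambda>i j. \<Sum>k. mpow Q k i j) R i j"
    by (rule sums_unique2)
qed

lemma skip_matrix_irreducible: "irreducible_on accepting (skip_matrix r \<alpha>)"
  unfolding irreducible_on_def
proof (intro ballI)
  fix i j assume "i \<in> accepting" and "j \<in> accepting"
  moreover obtain n where "0 < mpow r n i j" using irreducible_mpow_pos by blast
  ultimately show "\<exists>n. 0 < mpow_on accepting (skip_matrix r \<alpha>) n i j"
    using path_through_last_acceptance by blast
qed

end

theorem theorem2p2:
  fixes r :: "'n::finite \<Rightarrow> 'n \<Rightarrow> real" and \<alpha> :: "'n \<Rightarrow> real"
  assumes stoch: "stochastic r"
    and irr: "irreducible r"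
    and alpha_range: "\<forall>j. 0 \<le> \<alpha> j \<and> \<alpha> j \<le> 1"
    and alpha_nonzero: "\<exists>j. \<alpha> j \<noteq> 0"
  shows "(\<forall>i j. skip_matrix r \<alpha> i j = absorb_prob r \<alpha> i j)
    \<and> irreducible_on (UNIV - {j. \<alpha> j = 0}) (skip_matrix r \<alpha>)
    \<and> (\<forall>i j. (\<lambda>k. mmult (mpow (mmult r (diagm (\<lambda>l. 1 - \<alpha> l))) k) (mmult r (diagm \<alpha>)) i j)
              sums skip_matrix r \<alpha> i j)
    \<and> (\<exists>N. mmult N (\<lambda>i j. mid i j - mmult r (diagm (\<lambda>l. 1 - \<alpha> l)) i j) = mid
           \<and> mmult (\<lambda>i j. mid i j - mmult r (diagm (\<lambda>l. 1 - \<alpha> l)) i j) N = mid)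
    \<and> (\<forall>N. mmult N (\<lambda>i j. mid i j - mmult r (diagm (\<lambda>l. 1 - \<alpha> l)) i j) = mid
           \<and> mmult (\<lambda>i j. mid i j - mmult r (diagm (\<lambda>l. 1 - \<alpha> l)) i j) N = mid
           \<longrightarrow> skip_matrix r \<alpha> = mmult N (mmult r (diagm \<alpha>)))"
proof -
  interpret irreducible_skipping r \<alpha> using assms by unfold_locales
  define N where "N = (\<lambda>i j. \<Sum>k. mpow Q k i j)"
  have N_left: "mmult N (\<lambda>i j. mid i j - Q i j) = mid"
    and N_right: "mmult (\<lambda>i j. mid i j - Q i j) N = mid"
    unfolding N_def using neumann_series_inverse[OF summable_mpow_Q] by blast+
  show ?thesis
  proof (intro conjI allI impI)
    show "skip_matrix r \<alpha> i j = absorb_prob r \<alpha> i j" for i j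
      by (simp add: absorb_prob_eq_skip_matrix)
    show "irreducible_on (UNIV - {j. \<alpha> j = 0}) (skip_matrix r \<alpha>)"
      by (rule skip_matrix_irreducible)
    show "(\<lambda>k. mmult (mpow Q k) R i j) sums skip_matrix r \<alpha> i j" for i j
      by (rule skip_matrix_sums)
    show "\<exists>N. mmult N (\<lambda>i j. mid i j - Q i j) = mid \<and> mmult (\<lambda>i j. mid i j - Q i j) N = mid"
      using N_left N_right by blast
  next
    fix N' assume "mmult N' (\<lambda>i j. mid i j - Q i j) = mid \<and> mmult (\<lambda>i j. mid i j - Q i j) N' = mid"
    then have "N' = N" using left_inverse_eq_right_inverse N_right by blast
    then show "skip_matrix r \<alpha> = mmult N' R" by (simp add: skip_matrix_eq_fundamental N_def)
  qed
qed

end
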